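(* For every base $\mathscr{B}$, finite multisets of atoms $P,S$ and atom $q$: $P,S\vdash_{\mathscr{B}}q$ if and only if $P\Vdash^{S}_{\mathscr{B}}q$.
   Context: Fix a countably infinite set $\mathbb{A}$ of atoms. IMLL formulas: $\varphi::= p\in\mathbb{A}\mid\varphi\otimes\varphi\mid \mathrm{I}\mid\varphi\multimap\varphi$. Collections are finite multisets; "$,$" denotes multiset union. An atomic rule is $(P_1\triangleright p_1,\dots,P_n\triangleright p_n)\Rightarrow p$ ($n\ge0$, $P_i$ finite multisets of atoms); a base is a set of atomic rules. Derivability $\vdash_{\mathscr{B}}$ is the least relation with (Ref) $[p]\vdash_{\mathscr{B}}p$; (App) if $(P_1\triangleright p_1,\dots,P_n\triangleright p_n)\Rightarrow p\in\mathscr{B}$ and $S_i,P_i\vdash_{\mathscr{B}}p_i$ for all $i$, then $S_1,\dots,S_n\vdash_{\mathscr{B}}p$. Support: (At) $\Vdash^{P}_{\mathscr{B}}p$ iff $P\vdash_{\mathscr{B}}p$; ($\otimes$) $\Vdash^{P}_{\mathscr{B}}\varphi\otimes\psi$ iff for every $\mathscr{X}\supseteq\mathscr{B}$, multiset of atoms $U$, atom $p$, if $\varphi,\psi\Vdash^{U}_{\mathscr{X}}p$ then $\Vdash^{P,U}_{\mathscr{X}}p$; ($\mathrm{I}$) $\Vdash^{P}_{\mathscr{B}}\mathrm{I}$ iff for every $\mathscr{X}\supseteq\mathscr{B}$, $U$, $p$, if $\Vdash^{U}_{\mathscr{X}}p$ then $\Vdash^{P,U}_{\mathscr{X}}p$;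 ($\multimap$) $\Vdash^{P}_{\mathscr{B}}\varphi\multimap\psi$ iff $\varphi\Vdash^{P}_{\mathscr{B}}\psi$; (comma) for nonempty $\Gamma,\Delta$, $\Vdash^{P}_{\mathscr{B}}\Gamma,\Delta$ iff $P=U,V$ for some $U,V$ with $\Vdash^{U}_{\mathscr{B}}\Gamma$, $\Vdash^{V}_{\mathscr{B}}\Delta$ (singleton $[\varphi]$ supported iff $\varphi$ is); (Inf) for nonempty $\Gamma$, $\Gamma\Vdash^{P}_{\mathscr{B}}\varphi$ iff for every $\mathscr{X}\supseteq\mathscr{B}$ and $U$, if $\Vdash^{U}_{\mathscr{X}}\Gamma$ then $\Vdash^{P,U}_{\mathscr{X}}\varphi$; for empty $\Gamma$ it means $\Vdash^{P}_{\mathscr{B}}\varphi$. Here a multiset of atoms $P$ on the left of $\Vdash$ is viewed as a multiset of atomic formulas. *)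

theory Defs
  imports Main "HOL-Library.Multiset"
begin

text \<open>Atoms: a countably infinite set, represented by nat.\<close>
type_synonym atom = nat

datatype formula =
    Atom atom
  | Tensor formula formula
  | One
  | Lolli formula formula

text \<open>An atomic rule (P1|>p1, ..., Pn|>pn) => p: a list of premises (Pi, pi) and a conclusion p.\<close>
type_synonym rule = "(atom multiset \<times> atom) list \<times> atom"
type_synonym base = "rule set"

inductive derivable :: "base \<Rightarrow> atom multiset \<Rightarrow> atom \<Rightarrow> bool" for B :: base where
  Ref: "derivable B {#p#} p"
| App: "\<lbrakk> (prems, p) \<in> B; length Ss = length prems;
          \<forall>i < length prems. derivable B (Ss ! i + fst (prems ! i)) (snd (prems ! i)) \<rbrakk>
        \<Longrightarrow> derivable B (sum_list Ss) p"

text \<open>In the tensor clause, \<open>\<phi>, \<psi> \<Vdash>^U_X p\<close> is unfolded via (Inf) and the comma rule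
  for the two-element multiset [\<phi>,\<psi>].\<close>
fun supp :: "base \<Rightarrow> atom multiset \<Rightarrow> formula \<Rightarrow> bool" where
  "supp B P (Atom p) = derivable B P p"
| "supp B P (Tensor \<phi> \<psi>) =
     (\<forall>X U p. B \<subseteq> X \<longrightarrow>
        (\<forall>Y V. X \<subseteq> Y \<longrightarrow>
            (\<exists>V1 V2. V = V1 + V2 \<and> supp Y V1 \<phi> \<and> supp Y V2 \<psi>) \<longrightarrow> derivable Y (U + V) p)
        \<longrightarrow> derivable X (P + U) p)"
| "supp B P One = (\<forall>X U p. B \<subseteq> X \<longrightarrow> derivable X U p \<longrightarrow> derivable X (P + U) p)"
| "supp B P (Lolli \<phi> \<psi>) = (\<forall>X U. B \<subseteq> X \<longrightarrow> supp X U \<phi> \<longrightarrow> supp X (P + U) \<psi>)"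

inductive supp_ms :: "base \<Rightarrow> atom multiset \<Rightarrow> formula multiset \<Rightarrow> bool" where
  single: "supp B P \<phi> \<Longrightarrow> supp_ms B P {#\<phi>#}"
| comma: "\<lbrakk> \<Gamma> \<noteq> {#}; \<Delta> \<noteq> {#}; supp_ms B U \<Gamma>; supp_ms B V \<Delta> \<rbrakk>
          \<Longrightarrow> supp_ms B (U + V) (\<Gamma> + \<Delta>)"

definition supp_inf :: "base \<Rightarrow> atom multiset \<Rightarrow> formula multiset \<Rightarrow> formula \<Rightarrow> bool" where
  "supp_inf B P \<Gamma> \<phi> =
     (if \<Gamma> = {#} then supp B P \<phi>
      else (\<forall>X U. B \<subseteq> X \<longrightarrow> supp_ms X U \<Gamma> \<longrightarrow> supp X (P + U) \<phi>))"

end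

theory Submission
  imports Defs
begin

text \<open>Atomic support is derivability, so the left-to-right direction is cut admissibility for
  the atomic calculus, together with monotonicity of derivability in the base: a support of
  the atoms \<open>P\<close> in context \<open>U\<close> splits, by the comma rule, into derivations of the single atoms
  of \<open>P\<close> from a partition of \<open>U\<close>, and these can be cut one by one into a derivation of \<open>q\<close>
  from \<open>P, S\<close>. Conversely, \<open>P\<close> supports itself by (Ref), so instantiating the inference at
  \<open>U = P\<close> gives back \<open>P, S \<turnstile> q\<close>.\<close>

lemma derivable_mono: "derivable B P p \<Longrightarrow> B \<subseteq> X \<Longrightarrow> derivable X P p"
  by (induction rule: derivable.induct) (auto intro: derivable.intros)

lemma sum_list_update_add:
  fixes xs :: "'a::comm_monoid_add list"
  shows "i < length xs \<Longrightarrow> sum_list (xs[i := x]) + xs ! i = sum_list xs + x"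
  by (induction xs arbitrary: i) (auto simp: ac_simps split: nat.split)

lemma derivable_cut:
  assumes "derivable B (add_mset p M) q" and "derivable B U p"
  shows "derivable B (M + U) q"
  using assms
proof (induction "add_mset p M" q arbitrary: M rule: derivable.induct)
  case Ref
  then show ?case by (simp add: single_eq_add_mset)
next
  case (App prems r Ss)
  then have "p \<in># sum_list Ss" by simp
  \<comment> \<open>\<open>p\<close> sits in the context of some premise \<open>i\<close>; cut there and leave the other premises alone\<close>
  then obtain i where i: "i < length Ss" "p \<in># Ss ! i"
    by (auto simp: in_set_conv_nth)
  define Mi where "Mi = Ss ! i - {#p#}"
  have Si: "Ss ! i = add_mset p Mi" using i(2) by (simp add: Mi_def)
  have "derivable B (Mi + fst (prems ! i) + U) (snd (prems ! i))"
    using App i Si by (auto simp: ac_simps)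
  with App.hyps(3) i(1) have updated_premises: "\<forall>j < length prems.
      derivable B (Ss[i := Mi + U] ! j + fst (prems ! j)) (snd (prems ! j))"
    by (simp add: nth_list_update ac_simps)
  have "sum_list (Ss[i := Mi + U]) = M + U"
    using sum_list_update_add[OF i(1), of "Mi + U"] App.hyps(4) Si by simp
  then show ?case
    using derivable.App[OF App.hyps(1) _ updated_premises] App.hyps(2) by simp
qed

lemma supp_ms_atoms_cut:
  assumes "supp_ms B U (image_mset Atom P)" and "derivable B (M + P) q"
  shows "derivable B (M + U) q"
  using assms
proof (induction B U "image_mset Atom P" arbitrary: M P q rule: supp_ms.induct)
  case (single B U \<phi>)
  then obtain p where "P = {#p#}" "\<phi> = Atom p"
    by (cases P) (auto simp: add_mset_eq_single)
  then show ?case using single derivable_cut by auto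
next
  case (comma \<Gamma> \<Delta> B U V)
  then obtain P1 P2 where P: "P = P1 + P2"
    and \<Gamma>: "\<Gamma> = image_mset Atom P1" and \<Delta>: "\<Delta> = image_mset Atom P2"
    by (metis image_mset_eq_plusD)
  have "derivable B (M + P1 + V) q"
    using comma.hyps(6)[where P = P2 and M = "M + P1"] comma.prems P \<Delta>
    by (simp add: add.assoc)
  then have "derivable B (M + V + U) q"
    using comma.hyps(4)[where P = P1 and M = "M + V"] \<Gamma>
    by (simp add: ac_simps)
  then show ?case by (simp add: ac_simps)
qed

lemma supp_ms_atoms: "P \<noteq> {#} \<Longrightarrow> supp_ms B P (image_mset Atom P)"
proof (induction P)
  case (add p P)
  have "supp_ms B {#p#} {#Atom p#}"
    by (simp add: derivable.Ref supp_ms.single)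
  with add show ?case
    using supp_ms.comma[of "{#Atom p#}" "image_mset Atom P" B "{#p#}" P]
    by (cases "P = {#}") simp_all
qed simp

theorem mainTheorem8:
  fixes B :: base and P S :: "atom multiset" and q :: atom
  shows "derivable B (P + S) q \<longleftrightarrow> supp_inf B S (image_mset Atom P) (Atom q)"
proof (cases "P = {#}")
  case False
  have "derivable B (P + S) q \<longleftrightarrow>
      (\<forall>X U. B \<subseteq> X \<longrightarrow> supp_ms X U (image_mset Atom P) \<longrightarrow> derivable X (S + U) q)"
  proof
    assume "derivable B (P + S) q"
    then show "\<forall>X U. B \<subseteq> X \<longrightarrow> supp_ms X U (image_mset Atom P) \<longrightarrow> derivable X (S + U) q"
      using derivable_mono supp_ms_atoms_cut by (simp add: add.commute)
  next
    assume "\<forall>X U. B \<subseteq> X \<longrightarrow> supp_ms X U (image_mset Atom P) \<longrightarrow> derivable X (S + U) q"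
    then have "derivable B (S + P) q"
      using supp_ms_atoms[OF False] by blast
    then show "derivable B (P + S) q" by (simp add: add.commute)
  qed
  with False show ?thesis by (simp add: supp_inf_def)
qed (simp add: supp_inf_def)

end
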